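(* Let $\mathbb{E}$ be a finitely complete category, $\Sigma$ a fibrational class of split epimorphisms, and suppose $\mathbb{E}$ is a $\Sigma$-Mal'tsev category. Let $d_0,d_1\colon X_1\rightrightarrows X_0$, $s_0\colon X_0\to X_1$ ($d_0s_0=d_1s_0=1_{X_0}$) be a reflexive graph such that $(d_0,s_0)\in\Sigma$. Let $X_2=\{(u,v)\in X_1\times X_1: d_1u=d_0v\}$ be the pullback of $d_0$ along $d_1$ (the object of composable pairs), and let $\iota_1=(1_{X_1},s_0d_1)\colon X_1\to X_2$ and $\iota_2=(s_0d_0,1_{X_1})\colon X_1\to X_2$. Then there is at most one morphism $m\colon X_2\to X_1$ with $m\iota_1=1_{X_1}$ and $m\iota_2=1_{X_1}$, and whenever such an $m$ exists, it is the composition of an internal category structure on this reflexive graph. Consequently, on such a reflexive graph there is at most one structure of internal category.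
   Context: A split epimorphism is a pair $(f,s)$ with $fs=1$. A class $\Sigma$ of split epimorphisms is fibrational if it contains all split epimorphisms $(f,s)$ with $f$ invertible and is stable under pullback along any morphism. A pair of morphisms with common codomain $Z$ is jointly extremally epic if it factors jointly through no non-invertible monomorphism into $Z$. $\mathbb{E}$ is $\Sigma$-Mal'tsev if for every split epimorphism $(f,s)\colon X\rightleftarrows Y$ in $\Sigma$ and every split epimorphism $(g,t)$ with $g\colon Y'\to Y$, letting $X'=Y'\times_YX$, $s'=(1_{Y'},sg)$, $\bar t=(tf,1_X)$, the pair $(s',\bar t)$ is jointly extremally epic. *)

theory Defs
  imports Main
begin

text \<open>A category whose objects are all elements of type 'o and whose arrows are all
elements of type 'a.  cmp C g f is the composite g after f (meaningful when tgt f = src g).\<close>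

record ('o, 'a) category =
  src :: "'a \<Rightarrow> 'o"
  tgt :: "'a \<Rightarrow> 'o"
  idn :: "'o \<Rightarrow> 'a"
  cmp :: "'a \<Rightarrow> 'a \<Rightarrow> 'a"

definition hom :: "('o, 'a) category \<Rightarrow> 'a \<Rightarrow> 'o \<Rightarrow> 'o \<Rightarrow> bool" where
  "hom C f X Y \<longleftrightarrow> src C f = X \<and> tgt C f = Y"

definition is_category :: "('o, 'a) category \<Rightarrow> bool" where
  "is_category C \<longleftrightarrow>
     (\<forall>X. hom C (idn C X) X X) \<and>
     (\<forall>f g. tgt C f = src C g \<longrightarrow> hom C (cmp C g f) (src C f) (tgt C g)) \<and>
     (\<forall>f. cmp C f (idn C (src C f)) = f \<and> cmp C (idn C (tgt C f)) f = f) \<and>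
     (\<forall>f g h. tgt C f = src C g \<and> tgt C g = src C h \<longrightarrow>
        cmp C h (cmp C g f) = cmp C (cmp C h g) f)"

definition is_mono :: "('o, 'a) category \<Rightarrow> 'a \<Rightarrow> bool" where
  "is_mono C m \<longleftrightarrow> (\<forall>f g. tgt C f = src C m \<and> tgt C g = src C m \<and> src C f = src C g \<and>
      cmp C m f = cmp C m g \<longrightarrow> f = g)"

definition iso :: "('o, 'a) category \<Rightarrow> 'a \<Rightarrow> bool" where
  "iso C f \<longleftrightarrow> (\<exists>g. hom C g (tgt C f) (src C f) \<and>
      cmp C g f = idn C (src C f) \<and> cmp C f g = idn C (tgt C f))"

definition is_pullback :: "('o, 'a) category \<Rightarrow> 'a \<Rightarrow> 'a \<Rightarrow> 'o \<Rightarrow> 'a \<Rightarrow> 'a \<Rightarrow> bool" where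
  "is_pullback C f g P p1 p2 \<longleftrightarrow>
     tgt C f = tgt C g \<and> hom C p1 P (src C f) \<and> hom C p2 P (src C g) \<and>
     cmp C f p1 = cmp C g p2 \<and>
     (\<forall>x y. src C x = src C y \<and> tgt C x = src C f \<and> tgt C y = src C g \<and>
        cmp C f x = cmp C g y \<longrightarrow>
        (\<exists>!u. hom C u (src C x) P \<and> cmp C p1 u = x \<and> cmp C p2 u = y))"

definition terminal :: "('o, 'a) category \<Rightarrow> 'o \<Rightarrow> bool" where
  "terminal C T \<longleftrightarrow> (\<forall>X. \<exists>!t. hom C t X T)"

definition finitely_complete :: "('o, 'a) category \<Rightarrow> bool" where
  "finitely_complete C \<longleftrightarrow> (\<exists>T. terminal C T) \<and>
     (\<forall>f g. tgt C f = tgt C g \<longrightarrow> (\<exists>P p1 p2. is_pullback C f g P p1 p2))"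

definition split_epi :: "('o, 'a) category \<Rightarrow> 'a \<times> 'a \<Rightarrow> bool" where
  "split_epi C fs \<longleftrightarrow> (case fs of (f, s) \<Rightarrow>
     hom C s (tgt C f) (src C f) \<and> cmp C f s = idn C (tgt C f))"

definition fibrational :: "('o, 'a) category \<Rightarrow> ('a \<times> 'a) set \<Rightarrow> bool" where
  "fibrational C \<Sigma> \<longleftrightarrow>
     (\<forall>fs\<in>\<Sigma>. split_epi C fs) \<and>
     (\<forall>f s. split_epi C (f, s) \<and> iso C f \<longrightarrow> (f, s) \<in> \<Sigma>) \<and>
     (\<forall>f s g P p1 p2 s'. (f, s) \<in> \<Sigma> \<and> tgt C g = tgt C f \<and>
        is_pullback C g f P p1 p2 \<and>
        hom C s' (src C g) P \<and> cmp C p1 s' = idn C (src C g) \<and>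
        cmp C p2 s' = cmp C s g \<longrightarrow> (p1, s') \<in> \<Sigma>)"

definition jointly_extremally_epic :: "('o, 'a) category \<Rightarrow> 'a \<Rightarrow> 'a \<Rightarrow> bool" where
  "jointly_extremally_epic C a b \<longleftrightarrow> tgt C a = tgt C b \<and>
     (\<forall>m a' b'. is_mono C m \<and> tgt C m = tgt C a \<and>
        hom C a' (src C a) (src C m) \<and> hom C b' (src C b) (src C m) \<and>
        cmp C m a' = a \<and> cmp C m b' = b \<longrightarrow> iso C m)"

definition sigma_maltsev :: "('o, 'a) category \<Rightarrow> ('a \<times> 'a) set \<Rightarrow> bool" where
  "sigma_maltsev C \<Sigma> \<longleftrightarrow>
     (\<forall>f s g t P p1 p2 s' tb. (f, s) \<in> \<Sigma> \<and> split_epi C (g, t) \<and> tgt C g = tgt C f \<and>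
        is_pullback C g f P p1 p2 \<and>
        hom C s' (src C g) P \<and> cmp C p1 s' = idn C (src C g) \<and> cmp C p2 s' = cmp C s g \<and>
        hom C tb (src C f) P \<and> cmp C p1 tb = cmp C t f \<and> cmp C p2 tb = idn C (src C f)
        \<longrightarrow> jointly_extremally_epic C s' tb)"

definition reflexive_graph :: "('o, 'a) category \<Rightarrow> 'o \<Rightarrow> 'o \<Rightarrow> 'a \<Rightarrow> 'a \<Rightarrow> 'a \<Rightarrow> bool" where
  "reflexive_graph C X0 X1 d0 d1 s0 \<longleftrightarrow>
     hom C d0 X1 X0 \<and> hom C d1 X1 X0 \<and> hom C s0 X0 X1 \<and>
     cmp C d0 s0 = idn C X0 \<and> cmp C d1 s0 = idn C X0"

text \<open>Internal category structure with composition m : X2 -> X1 on the reflexive graph,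
  where X2 (projections pi1, pi2) is the pullback of d0 along d1, i.e. composable pairs
  (u,v) with d1 u = d0 v.  X3 is the object of composable triples, the pullback of
  pi1 along pi2 (q1 = (u,v), q2 = (v,w)); a = m x 1 and b = 1 x m.\<close>
definition internal_category ::
  "('o, 'a) category \<Rightarrow> 'o \<Rightarrow> 'o \<Rightarrow> 'a \<Rightarrow> 'a \<Rightarrow> 'a \<Rightarrow> 'o \<Rightarrow> 'a \<Rightarrow> 'a \<Rightarrow> 'a \<Rightarrow> bool" where
  "internal_category C X0 X1 d0 d1 s0 X2 pi1 pi2 m \<longleftrightarrow>
     reflexive_graph C X0 X1 d0 d1 s0 \<and> is_pullback C d1 d0 X2 pi1 pi2 \<and>
     hom C m X2 X1 \<and>
     cmp C d0 m = cmp C d0 pi1 \<and> cmp C d1 m = cmp C d1 pi2 \<and>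
     (\<forall>i. hom C i X1 X2 \<and> cmp C pi1 i = idn C X1 \<and> cmp C pi2 i = cmp C s0 d1
        \<longrightarrow> cmp C m i = idn C X1) \<and>
     (\<forall>i. hom C i X1 X2 \<and> cmp C pi1 i = cmp C s0 d0 \<and> cmp C pi2 i = idn C X1
        \<longrightarrow> cmp C m i = idn C X1) \<and>
     (\<forall>X3 q1 q2 a b. is_pullback C pi2 pi1 X3 q1 q2 \<and>
        hom C a X3 X2 \<and> cmp C pi1 a = cmp C m q1 \<and> cmp C pi2 a = cmp C pi2 q2 \<and>
        hom C b X3 X2 \<and> cmp C pi1 b = cmp C pi1 q1 \<and> cmp C pi2 b = cmp C m q2
        \<longrightarrow> cmp C m a = cmp C m b)"

end

theory Submission
  imports Defs
begin

text \<open>In a finitely complete category equalizers exist and are monomorphisms, so a jointly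
  extremally epic pair is jointly epic. Pulling (d0, s0) \<in> \<Sigma> back along d1 gives (pi1, i1),
  and the Mal'tsev condition makes (i1, i2) jointly extremally epic: an arrow out of X2 is
  determined by its restrictions along i1 and i2. This yields uniqueness of m and the
  identities d0 m = d0 pi1, d1 m = d1 pi2. For associativity, apply the same condition to
  (pi1, i1) \<in> \<Sigma> pulled back along pi2, i.e. to the object X3 of composable triples: both
  m (m \<times> 1) and m (1 \<times> m) restrict to m along its two sections.\<close>

locale cat =
  fixes C :: "('o, 'a) category"
  assumes is_category: "is_category C"
begin

lemma src_idn [simp]: "src C (idn C X) = X"
  and tgt_idn [simp]: "tgt C (idn C X) = X"
  and src_cmp: "tgt C f = src C g \<Longrightarrow> src C (cmp C g f) = src C f"
  and tgt_cmp: "tgt C f = src C g \<Longrightarrow> tgt C (cmp C g f) = tgt C g"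
  and cmp_idn_right: "src C f = X \<Longrightarrow> cmp C f (idn C X) = f"
  and cmp_idn_left: "tgt C f = Y \<Longrightarrow> cmp C (idn C Y) f = f"
  and cmp_assoc: "tgt C f = src C g \<Longrightarrow> tgt C g = src C h \<Longrightarrow>
      cmp C (cmp C h g) f = cmp C h (cmp C g f)"
  using is_category unfolding is_category_def hom_def by auto

lemma cmp_assoc_eq:
  assumes "cmp C h g = k" "tgt C g = src C h" "tgt C f = src C g"
  shows "cmp C h (cmp C g f) = cmp C k f"
  using cmp_assoc[OF assms(3,2)] assms(1) by simp

end

lemma pullbackD:
  assumes "is_pullback C f g P p1 p2"
  shows "tgt C f = tgt C g" "src C p1 = P" "tgt C p1 = src C f" "src C p2 = P"
    "tgt C p2 = src C g" "cmp C f p1 = cmp C g p2"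
  using assms unfolding is_pullback_def hom_def by auto

lemma pullback_pairing:
  assumes "is_pullback C f g P p1 p2" "src C x = src C y" "tgt C x = src C f"
    "tgt C y = src C g" "cmp C f x = cmp C g y"
  obtains u where "src C u = src C x" "tgt C u = P" "cmp C p1 u = x" "cmp C p2 u = y"
  using assms unfolding is_pullback_def hom_def by metis

lemma (in cat) pullback_arrow_eqI:
  assumes pb: "is_pullback C f g P p1 p2"
    and "src C u = src C v" "tgt C u = P" "tgt C v = P"
    and "cmp C p1 u = cmp C p1 v" "cmp C p2 u = cmp C p2 v"
  shows "u = v"
proof -
  note pp = pullbackD[OF pb]
  let ?x = "cmp C p1 u" and ?y = "cmp C p2 u"
  have "src C ?x = src C ?y" "tgt C ?x = src C f" "tgt C ?y = src C g"
    using assms pp by (simp_all add: src_cmp tgt_cmp)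
  moreover have "cmp C f ?x = cmp C g ?y"
    using assms pp by (simp add: cmp_assoc_eq)
  ultimately have "\<exists>!w. hom C w (src C ?x) P \<and> cmp C p1 w = ?x \<and> cmp C p2 w = ?y"
    using pb unfolding is_pullback_def by blast
  moreover have "hom C u (src C ?x) P" "hom C v (src C ?x) P"
    using assms pp by (simp_all add: hom_def src_cmp)
  ultimately show ?thesis using assms by metis
qed

locale finitely_complete_cat = cat +
  assumes finitely_complete: "finitely_complete C"
begin

lemma product_exists:
  obtains P r1 r2 where "src C r1 = P" "tgt C r1 = Z" "src C r2 = P" "tgt C r2 = Y"
    and "\<And>x y. src C x = src C y \<Longrightarrow> tgt C x = Z \<Longrightarrow> tgt C y = Y \<Longrightarrow>
      \<exists>u. src C u = src C x \<and> tgt C u = P \<and> cmp C r1 u = x \<and> cmp C r2 u = y"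
    and "\<And>u v. src C u = src C v \<Longrightarrow> tgt C u = P \<Longrightarrow> tgt C v = P \<Longrightarrow>
      cmp C r1 u = cmp C r1 v \<Longrightarrow> cmp C r2 u = cmp C r2 v \<Longrightarrow> u = v"
proof -
  obtain T where T: "terminal C T" using finitely_complete unfolding finitely_complete_def by blast
  obtain tZ tY where tZ: "src C tZ = Z" "tgt C tZ = T" and tY: "src C tY = Y" "tgt C tY = T"
    using T unfolding terminal_def hom_def by metis
  have to_T: "u = v" if "src C u = src C v" "tgt C u = T" "tgt C v = T" for u v
    using T that unfolding terminal_def hom_def by metis
  obtain P r1 r2 where pb: "is_pullback C tZ tY P r1 r2"
    using finitely_complete tZ tY unfolding finitely_complete_def by metis
  note pp = pullbackD[OF pb]
  show thesis
  proof
    fix x y assume xy: "src C x = src C y" "tgt C x = Z" "tgt C y = Y"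
    have "cmp C tZ x = cmp C tY y"
      by (rule to_T) (use xy tZ tY in \<open>simp_all add: src_cmp tgt_cmp\<close>)
    then show "\<exists>u. src C u = src C x \<and> tgt C u = P \<and> cmp C r1 u = x \<and> cmp C r2 u = y"
      using pullback_pairing[OF pb, of x y] xy tZ tY by metis
  next
    fix u v assume "src C u = src C v" "tgt C u = P" "tgt C v = P"
      "cmp C r1 u = cmp C r1 v" "cmp C r2 u = cmp C r2 v"
    then show "u = v" by (rule pullback_arrow_eqI[OF pb])
  qed (use pp tZ tY in simp_all)
qed

lemma pullback_of_sections:
  assumes E: "is_pullback C u u' E e e'"
    and u: "src C u = Z" "tgt C u = src C r" "cmp C r u = idn C Z"
    and u': "src C u' = Z" "tgt C u' = src C r" "cmp C r u' = idn C Z"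
  shows pullback_of_sections_eq: "e = e'"
    and pullback_of_sections_mono: "is_mono C e"
    and pullback_of_sections_factor: "\<And>h. tgt C h = Z \<Longrightarrow> cmp C u h = cmp C u' h \<Longrightarrow>
      \<exists>v. hom C v (src C h) (src C e) \<and> cmp C e v = h"
proof -
  note Ep = pullbackD[OF E]
  have "e = cmp C r (cmp C u e)"
    by (simp add: Ep(1-5) u u' u(3)[THEN cmp_assoc_eq] cmp_idn_left)
  also have "\<dots> = e'"
    by (simp add: Ep u u' u'(3)[THEN cmp_assoc_eq] cmp_idn_left)
  finally show ee': "e = e'" .
  show "is_mono C e"
    unfolding is_mono_def
  proof (intro allI impI)
    fix x y assume xy: "tgt C x = src C e \<and> tgt C y = src C e \<and> src C x = src C y \<and>
      cmp C e x = cmp C e y"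
    show "x = y"
      by (rule pullback_arrow_eqI[OF E]) (use xy Ep(2) ee' in auto)
  qed
  fix h assume h: "tgt C h = Z" "cmp C u h = cmp C u' h"
  obtain v where "src C v = src C h" "tgt C v = E" "cmp C e v = h"
    by (rule pullback_pairing[OF E, of h h]) (simp_all add: u u' h)
  then show "\<exists>v. hom C v (src C h) (src C e) \<and> cmp C e v = h"
    using Ep(2) unfolding hom_def by auto
qed

text \<open>The equalizer of f, g : Z \<rightarrow> Y is the pullback of their graphs (1,f), (1,g) : Z \<rightarrow> Z \<times> Y.\<close>

lemma equalizer_exists:
  assumes f: "src C f = Z" "tgt C f = Y" and g: "src C g = Z" "tgt C g = Y"
  obtains e where "tgt C e = Z" "is_mono C e" "cmp C f e = cmp C g e"
    and "\<And>h. tgt C h = Z \<Longrightarrow> cmp C f h = cmp C g h \<Longrightarrow>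
      \<exists>u. hom C u (src C h) (src C e) \<and> cmp C e u = h"
proof -
  obtain P r1 r2 where r: "src C r1 = P" "tgt C r1 = Z" "src C r2 = P" "tgt C r2 = Y"
    and pair: "\<And>x y. src C x = src C y \<Longrightarrow> tgt C x = Z \<Longrightarrow> tgt C y = Y \<Longrightarrow>
      \<exists>u. src C u = src C x \<and> tgt C u = P \<and> cmp C r1 u = x \<and> cmp C r2 u = y"
    and pair_eq: "\<And>u v. src C u = src C v \<Longrightarrow> tgt C u = P \<Longrightarrow> tgt C v = P \<Longrightarrow>
      cmp C r1 u = cmp C r1 v \<Longrightarrow> cmp C r2 u = cmp C r2 v \<Longrightarrow> u = v"
    by (rule product_exists) blast
  obtain uf where uf: "src C uf = Z" "tgt C uf = P" "cmp C r1 uf = idn C Z" "cmp C r2 uf = f"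
    using pair[of "idn C Z" f] f by auto
  obtain ug where ug: "src C ug = Z" "tgt C ug = P" "cmp C r1 ug = idn C Z" "cmp C r2 ug = g"
    using pair[of "idn C Z" g] g by auto
  obtain E e1 e2 where E: "is_pullback C uf ug E e1 e2"
    using finitely_complete uf ug unfolding finitely_complete_def by metis
  note Ep = pullbackD[OF E]
  have sections: "src C uf = Z" "tgt C uf = src C r1" "cmp C r1 uf = idn C Z"
    "src C ug = Z" "tgt C ug = src C r1" "cmp C r1 ug = idn C Z"
    using uf ug r by simp_all
  note e12 = pullback_of_sections_eq[OF E sections]
  have "cmp C f e1 = cmp C r2 (cmp C uf e1)"
    by (simp add: Ep(1-5) uf ug r uf(4)[THEN cmp_assoc_eq])
  also have "\<dots> = cmp C r2 (cmp C ug e2)" by (simp add: Ep(6))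
  also have "\<dots> = cmp C g e1"
    by (simp add: Ep(1-5) uf ug r e12 ug(4)[THEN cmp_assoc_eq])
  finally have fg: "cmp C f e1 = cmp C g e1" .
  have factor: "\<exists>u. hom C u (src C h) (src C e1) \<and> cmp C e1 u = h"
    if h: "tgt C h = Z" "cmp C f h = cmp C g h" for h
  proof (rule pullback_of_sections_factor[OF E sections])
    show "cmp C uf h = cmp C ug h"
      by (rule pair_eq) (simp_all add: uf ug r h src_cmp tgt_cmp cmp_idn_left
          uf(3,4)[THEN cmp_assoc_eq] ug(3,4)[THEN cmp_assoc_eq])
  qed (use uf ug r h in simp_all)
  show thesis
    by (rule that[OF _ pullback_of_sections_mono[OF E sections] fg factor])
      (use uf ug r Ep(3) in simp_all)
qed

lemma jointly_extremally_epic_cancel: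
  assumes jee: "jointly_extremally_epic C a b"
    and f: "src C f = tgt C a" and g: "src C g = tgt C a" and fg: "tgt C f = tgt C g"
    and "cmp C f a = cmp C g a" "cmp C f b = cmp C g b"
  shows "f = g"
proof -
  obtain e where e: "tgt C e = tgt C a" "is_mono C e" "cmp C f e = cmp C g e"
    and factor: "\<And>h. tgt C h = tgt C a \<Longrightarrow> cmp C f h = cmp C g h \<Longrightarrow>
      \<exists>u. hom C u (src C h) (src C e) \<and> cmp C e u = h"
    using equalizer_exists[OF f refl g fg[symmetric]] by blast
  have "tgt C b = tgt C a" using jee unfolding jointly_extremally_epic_def by simp
  then have "iso C e"
    using jee e factor[of a] factor[of b] assms unfolding jointly_extremally_epic_def by metis
  then obtain k where k: "hom C k (tgt C e) (src C e)" "cmp C e k = idn C (tgt C e)"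
    unfolding iso_def by blast
  have "f = cmp C f (cmp C e k)" using k e f by (simp add: cmp_idn_right)
  also have "\<dots> = cmp C (cmp C f e) k"
    by (rule cmp_assoc[symmetric]) (use k e f in \<open>simp_all add: hom_def\<close>)
  also have "\<dots> = cmp C (cmp C g e) k" using e by simp
  also have "\<dots> = cmp C g (cmp C e k)"
    by (rule cmp_assoc) (use k e g in \<open>simp_all add: hom_def\<close>)
  also have "\<dots> = g" using k e g by (simp add: cmp_idn_right)
  finally show ?thesis .
qed

lemma sigma_maltsev_cancel:
  assumes malt: "sigma_maltsev C \<Sigma>" and fs: "(f, s) \<in> \<Sigma>" and gt: "split_epi C (g, t)"
    and pb: "is_pullback C g f P p1 p2"
    and s': "src C s' = src C g" "tgt C s' = P" "cmp C p1 s' = idn C (src C g)"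
      "cmp C p2 s' = cmp C s g"
    and tb: "src C tb = src C f" "tgt C tb = P" "cmp C p1 tb = cmp C t f"
      "cmp C p2 tb = idn C (src C f)"
    and h: "src C h = P" and k: "src C k = P" and hk: "tgt C h = tgt C k"
    and "cmp C h s' = cmp C k s'" "cmp C h tb = cmp C k tb"
  shows "h = k"
proof (rule jointly_extremally_epic_cancel)
  show "jointly_extremally_epic C s' tb"
    using malt gt pb s' tb pullbackD[OF pb] unfolding sigma_maltsev_def hom_def by (metis fs)
qed (use assms in simp_all)

end

locale sigma_maltsev_graph = finitely_complete_cat C for C :: "('o, 'a) category" +
  fixes \<Sigma> :: "('a \<times> 'a) set"
    and X0 X1 X2 :: 'o and d0 d1 s0 pi1 pi2 i1 i2 :: 'a
  assumes fib: "fibrational C \<Sigma>"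
    and malt: "sigma_maltsev C \<Sigma>"
    and rg: "reflexive_graph C X0 X1 d0 d1 s0"
    and sig: "(d0, s0) \<in> \<Sigma>"
    and pb: "is_pullback C d1 d0 X2 pi1 pi2"
    and i1: "hom C i1 X1 X2" "cmp C pi1 i1 = idn C X1" "cmp C pi2 i1 = cmp C s0 d1"
    and i2: "hom C i2 X1 X2" "cmp C pi1 i2 = cmp C s0 d0" "cmp C pi2 i2 = idn C X1"
begin

lemma graph_types:
  "src C d0 = X1" "tgt C d0 = X0" "src C d1 = X1" "tgt C d1 = X0" "src C s0 = X0" "tgt C s0 = X1"
  "src C pi1 = X2" "tgt C pi1 = X1" "src C pi2 = X2" "tgt C pi2 = X1"
  "src C i1 = X1" "tgt C i1 = X2" "src C i2 = X1" "tgt C i2 = X2"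
  using rg pullbackD[OF pb] i1 i2 unfolding reflexive_graph_def hom_def by auto

lemma graph_eqs:
  "cmp C d0 s0 = idn C X0" "cmp C d1 s0 = idn C X0" "cmp C d1 pi1 = cmp C d0 pi2"
  "cmp C pi1 i1 = idn C X1" "cmp C pi2 i1 = cmp C s0 d1"
  "cmp C pi1 i2 = cmp C s0 d0" "cmp C pi2 i2 = idn C X1"
  using rg pullbackD[OF pb] i1 i2 unfolding reflexive_graph_def by auto

lemmas graph_simps = graph_types graph_eqs src_cmp tgt_cmp cmp_idn_left cmp_idn_right cmp_assoc
  graph_eqs[THEN cmp_assoc_eq]

lemma split_epi_d1_s0: "split_epi C (d1, s0)"
  and split_epi_pi2_i2: "split_epi C (pi2, i2)"
  by (simp_all add: split_epi_def hom_def graph_simps)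

lemma pi1_i1_in_Sigma: "(pi1, i1) \<in> \<Sigma>"
  using fib sig pb i1 graph_types graph_eqs unfolding fibrational_def hom_def by metis

lemma unit_arrows_cancel:
  assumes "src C h = X2" "src C k = X2" "tgt C h = tgt C k"
    and "cmp C h i1 = cmp C k i1" "cmp C h i2 = cmp C k i2"
  shows "h = k"
  by (rule sigma_maltsev_cancel[OF malt sig split_epi_d1_s0 pb, of i1 i2])
    (use assms in \<open>simp_all add: graph_simps\<close>)

lemma unital_multiplication_unique:
  assumes "hom C m X2 X1" "cmp C m i1 = idn C X1" "cmp C m i2 = idn C X1"
    and "hom C m' X2 X1" "cmp C m' i1 = idn C X1" "cmp C m' i2 = idn C X1"
  shows "m = m'"
  by (rule unit_arrows_cancel) (use assms in \<open>simp_all add: hom_def\<close>)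

context
  fixes m assumes m: "hom C m X2 X1" "cmp C m i1 = idn C X1" "cmp C m i2 = idn C X1"
begin

lemma multiplication_types: "src C m = X2" "tgt C m = X1"
  using m(1) unfolding hom_def by auto

lemmas multiplication_simps = multiplication_types m(2,3) m(2,3)[THEN cmp_assoc_eq]

lemma multiplication_source: "cmp C d0 m = cmp C d0 pi1"
  by (rule unit_arrows_cancel) (simp_all add: graph_simps multiplication_simps)

lemma multiplication_target: "cmp C d1 m = cmp C d1 pi2"
  by (rule unit_arrows_cancel) (simp_all add: graph_simps multiplication_simps)

text \<open>On composable triples (u, v, w), the section s' is (u, v) \<mapsto> (u, v, 1) and tb is
  (v, w) \<mapsto> (1, v, w).\<close>

lemma multiplication_assoc:
  assumes X3: "is_pullback C pi2 pi1 X3 q1 q2"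
    and a: "hom C a X3 X2" "cmp C pi1 a = cmp C m q1" "cmp C pi2 a = cmp C pi2 q2"
    and b: "hom C b X3 X2" "cmp C pi1 b = cmp C pi1 q1" "cmp C pi2 b = cmp C m q2"
  shows "cmp C m a = cmp C m b"
proof -
  have arrow_types: "src C q1 = X3" "tgt C q1 = X2" "src C q2 = X3" "tgt C q2 = X2"
    "src C a = X3" "tgt C a = X2" "src C b = X3" "tgt C b = X2"
    using pullbackD[OF X3] a b graph_types unfolding hom_def by auto
  note simps = graph_simps multiplication_simps arrow_types a(2,3) b(2,3)
    a(2,3)[THEN cmp_assoc_eq] b(2,3)[THEN cmp_assoc_eq]
    multiplication_source multiplication_target
    multiplication_source[THEN cmp_assoc_eq] multiplication_target[THEN cmp_assoc_eq]
  obtain s' where s': "src C s' = X2" "tgt C s' = X3" "cmp C q1 s' = idn C X2"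
      "cmp C q2 s' = cmp C i1 pi2"
    by (rule pullback_pairing[OF X3, of "idn C X2" "cmp C i1 pi2"]) (simp_all add: simps)
  obtain tb where tb: "src C tb = X2" "tgt C tb = X3" "cmp C q1 tb = cmp C i2 pi1"
      "cmp C q2 tb = idn C X2"
    by (rule pullback_pairing[OF X3, of "cmp C i2 pi1" "idn C X2"]) (simp_all add: simps)
  note simps = simps s' tb s'(3,4)[THEN cmp_assoc_eq] tb(3,4)[THEN cmp_assoc_eq]
  have a_s': "cmp C a s' = cmp C i1 m"
    by (rule pullback_arrow_eqI[OF pb]) (simp_all add: simps)
  have b_s': "cmp C b s' = idn C X2"
    by (rule pullback_arrow_eqI[OF pb]) (simp_all add: simps)
  have a_tb: "cmp C a tb = idn C X2"
    by (rule pullback_arrow_eqI[OF pb]) (simp_all add: simps)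
  have b_tb: "cmp C b tb = cmp C i2 m"
    by (rule pullback_arrow_eqI[OF pb]) (simp_all add: simps)
  show ?thesis
    by (rule sigma_maltsev_cancel[OF malt pi1_i1_in_Sigma split_epi_pi2_i2 X3, of s' tb])
      (simp_all add: simps a_s' b_s' a_tb b_tb)
qed

lemma multiplication_internal_category: "internal_category C X0 X1 d0 d1 s0 X2 pi1 pi2 m"
proof -
  have unit1: "i = i1" if "hom C i X1 X2" "cmp C pi1 i = idn C X1" "cmp C pi2 i = cmp C s0 d1" for i
    by (rule pullback_arrow_eqI[OF pb]) (use that graph_types graph_eqs in \<open>auto simp: hom_def\<close>)
  have unit2: "i = i2" if "hom C i X1 X2" "cmp C pi1 i = cmp C s0 d0" "cmp C pi2 i = idn C X1" for i
    by (rule pullback_arrow_eqI[OF pb]) (use that graph_types graph_eqs in \<open>auto simp: hom_def\<close>)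
  show ?thesis
    unfolding internal_category_def
  proof (intro conjI allI impI rg pb m(1) multiplication_source multiplication_target)
    fix i assume "hom C i X1 X2 \<and> cmp C pi1 i = idn C X1 \<and> cmp C pi2 i = cmp C s0 d1"
    then show "cmp C m i = idn C X1" using unit1 m by blast
  next
    fix i assume "hom C i X1 X2 \<and> cmp C pi1 i = cmp C s0 d0 \<and> cmp C pi2 i = idn C X1"
    then show "cmp C m i = idn C X1" using unit2 m by blast
  qed (use multiplication_assoc in blast)
qed

end

lemma internal_category_unital:
  assumes "internal_category C X0 X1 d0 d1 s0 X2 pi1 pi2 m"
  shows "hom C m X2 X1" "cmp C m i1 = idn C X1" "cmp C m i2 = idn C X1"
  using assms i1 i2 unfolding internal_category_def by blast+

end

theorem proposition2p4:
  fixes C :: "('o, 'a) category" and \<Sigma> :: "('a \<times> 'a) set"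
    and X0 X1 X2 :: 'o and d0 d1 s0 pi1 pi2 i1 i2 :: 'a
  assumes cat: "is_category C"
    and fc: "finitely_complete C"
    and fib: "fibrational C \<Sigma>"
    and malt: "sigma_maltsev C \<Sigma>"
    and rg: "reflexive_graph C X0 X1 d0 d1 s0"
    and sig: "(d0, s0) \<in> \<Sigma>"
    and pb: "is_pullback C d1 d0 X2 pi1 pi2"
    and i1: "hom C i1 X1 X2" "cmp C pi1 i1 = idn C X1" "cmp C pi2 i1 = cmp C s0 d1"
    and i2: "hom C i2 X1 X2" "cmp C pi1 i2 = cmp C s0 d0" "cmp C pi2 i2 = idn C X1"
  shows "(\<forall>m m'. hom C m X2 X1 \<and> cmp C m i1 = idn C X1 \<and> cmp C m i2 = idn C X1 \<and>
                 hom C m' X2 X1 \<and> cmp C m' i1 = idn C X1 \<and> cmp C m' i2 = idn C X1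
                 \<longrightarrow> m = m')
       \<and> (\<forall>m. hom C m X2 X1 \<and> cmp C m i1 = idn C X1 \<and> cmp C m i2 = idn C X1
                 \<longrightarrow> internal_category C X0 X1 d0 d1 s0 X2 pi1 pi2 m)
       \<and> (\<forall>m m'. internal_category C X0 X1 d0 d1 s0 X2 pi1 pi2 m \<and>
                 internal_category C X0 X1 d0 d1 s0 X2 pi1 pi2 m' \<longrightarrow> m = m')"
proof -
  interpret sigma_maltsev_graph C \<Sigma> X0 X1 X2 d0 d1 s0 pi1 pi2 i1 i2
    by unfold_locales (fact assms)+
  show ?thesis
    using unital_multiplication_unique multiplication_internal_category internal_category_unital
    by meson
qed

end
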